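(* Let $\mathcal K$ be an abstract Krivine structure, $\mathsf E=\mathsf S(\mathsf K(\mathsf S\mathsf K\mathsf K))$, and for $P\subseteq\Pi$ put $\eta P=\{\mathsf E\mathsf E\}^\perp\ast_\bullet{}^\perp P$. Then for all $P\subseteq\Pi$ and $L\subseteq\Lambda$: $$P\ast_\bullet L\subseteq P\ast L\subseteq P\ast_\perp L\subseteq P\,\clubsuit\,L\subseteq \eta P\ast_\bullet L\subseteq\eta P\ast L\subseteq\eta P\ast_\perp L.$$
   Context: An abstract Krivine structure $\mathcal K$ consists of sets $\Lambda$ (terms), $\Pi$ (stacks), a relation $\perp\subseteq\Lambda\times\Pi$ (write $t\perp\pi$), a map $\mathrm{push}:\Lambda\times\Pi\to\Pi$ written $t\cdot\pi$ (associating to the right), a map $\mathrm{app}:\Lambda\times\Lambda\to\Lambda$ written $ts$ (associating to the left), a subset $\mathrm{QP}\subseteq\Lambda$ closed under application, and $\mathsf K,\mathsf S\in\mathrm{QP}$ such that for all $t,s,u\in\Lambda$, $\pi\in\Pi$: (a) $t\perp s\cdot\pi$ implies $ts\perp\pi$; (b) $t\perp\pi$ implies $\mathsf K\perp t\cdot s\cdot\pi$; (c) $tu(su)\perp\pi$ implies $\mathsf S\perp t\cdot s\cdot u\cdot\pi$. Polars: $L^\perp=\{\pi:\forall t\in L,\ t\perp\pi\}$, ${}^\perp P=\{t:\forall\pi\in P,\ t\perp\pi\}$; $\overline P=({}^\perp P)^\perp$. Define $P\ast L=\{\pi: t\cdot\pi\in P\ \forall t\in L\}$, $P\ast_\perp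 L=\overline{P\ast L}$, $P\ast_\bullet L=\{\pi: t\cdot\pi'\in P\ \forall t\in L,\ \pi'\in\overline{\{\pi\}}\}$, $P\,\clubsuit\,L=(\{t\ell:t\in{}^\perp P,\ \ell\in L\})^\perp$. *)

theory Defs
  imports Main
begin

text \<open>Abstract Krivine structure: terms of type 'l, stacks of type 's.
  The sets Lambda and Pi are the full types. Parameters:
  orth (the pole relation t \<perp> pi), push (t . pi), app (t s), QP, K, S.\<close>

definition krivine_structure ::
  "('l \<Rightarrow> 's \<Rightarrow> bool) \<Rightarrow> ('l \<Rightarrow> 's \<Rightarrow> 's) \<Rightarrow> ('l \<Rightarrow> 'l \<Rightarrow> 'l) \<Rightarrow> 'l set \<Rightarrow> 'l \<Rightarrow> 'l \<Rightarrow> bool"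
where
  "krivine_structure orth push app QP K S \<longleftrightarrow>
     (\<forall>t\<in>QP. \<forall>s\<in>QP. app t s \<in> QP) \<and> K \<in> QP \<and> S \<in> QP \<and>
     (\<forall>t s \<pi>. orth t (push s \<pi>) \<longrightarrow> orth (app t s) \<pi>) \<and>
     (\<forall>t s \<pi>. orth t \<pi> \<longrightarrow> orth K (push t (push s \<pi>))) \<and>
     (\<forall>t s u \<pi>. orth (app (app t u) (app s u)) \<pi> \<longrightarrow> orth S (push t (push s (push u \<pi>))))"

definition polar_terms :: "('l \<Rightarrow> 's \<Rightarrow> bool) \<Rightarrow> 'l set \<Rightarrow> 's set" where
  "polar_terms orth L = {\<pi>. \<forall>t\<in>L. orth t \<pi>}"

definition polar_stacks :: "('l \<Rightarrow> 's \<Rightarrow> bool) \<Rightarrow> 's set \<Rightarrow> 'l set" where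
  "polar_stacks orth P = {t. \<forall>\<pi>\<in>P. orth t \<pi>}"

definition biclosure :: "('l \<Rightarrow> 's \<Rightarrow> bool) \<Rightarrow> 's set \<Rightarrow> 's set" where
  "biclosure orth P = polar_terms orth (polar_stacks orth P)"

definition arrow :: "('l \<Rightarrow> 's \<Rightarrow> 's) \<Rightarrow> 's set \<Rightarrow> 'l set \<Rightarrow> 's set" where
  "arrow push P L = {\<pi>. \<forall>t\<in>L. push t \<pi> \<in> P}"

definition arrow_perp :: "('l \<Rightarrow> 's \<Rightarrow> bool) \<Rightarrow> ('l \<Rightarrow> 's \<Rightarrow> 's) \<Rightarrow> 's set \<Rightarrow> 'l set \<Rightarrow> 's set" where
  "arrow_perp orth push P L = biclosure orth (arrow push P L)"

definition arrow_bullet :: "('l \<Rightarrow> 's \<Rightarrow> bool) \<Rightarrow> ('l \<Rightarrow> 's \<Rightarrow> 's) \<Rightarrow> 's set \<Rightarrow> 'l set \<Rightarrow> 's set" where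
  "arrow_bullet orth push P L =
     {\<pi>. \<forall>t\<in>L. \<forall>\<pi>'\<in>biclosure orth {\<pi>}. push t \<pi>' \<in> P}"

definition arrow_club :: "('l \<Rightarrow> 's \<Rightarrow> bool) \<Rightarrow> ('l \<Rightarrow> 'l \<Rightarrow> 'l) \<Rightarrow> 's set \<Rightarrow> 'l set \<Rightarrow> 's set" where
  "arrow_club orth app P L =
     polar_terms orth {app t l | t l. t \<in> polar_stacks orth P \<and> l \<in> L}"

end

theory Submission
  imports Defs
begin

text \<open>All inclusions except the third and fourth hold for any set of stacks, since a stack
  always lies in the biclosure of itself. The third is antitonicity of polars, as
  \<open>t \<bottom> l \<cdot> \<pi>\<close> implies \<open>t l \<bottom> \<pi>\<close>. For the fourth, the term \<open>E = S (K I)\<close> with \<open>I = S K K\<close>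
  satisfies \<open>E \<star> t \<cdot> u \<cdot> \<pi> \<succ> t u \<star> \<pi>\<close>; so if \<open>t l \<bottom> \<pi>'\<close> then \<open>E t \<bottom> l \<cdot> \<pi>'\<close>, and
  then \<open>E E \<bottom> t \<cdot> \<rho>\<close> for every \<open>\<rho>\<close> in the biclosure of \<open>l \<cdot> \<pi>'\<close>.\<close>

lemma krivine_structure_app:
  "krivine_structure orth push app QP K S \<Longrightarrow> orth t (push s \<pi>) \<Longrightarrow> orth (app t s) \<pi>"
  unfolding krivine_structure_def by blast

lemma krivine_structure_K:
  "krivine_structure orth push app QP K S \<Longrightarrow> orth t \<pi> \<Longrightarrow> orth K (push t (push s \<pi>))"
  unfolding krivine_structure_def by blast

lemma krivine_structure_S:
  "krivine_structure orth push app QP K S \<Longrightarrow> orth (app (app t u) (app s u)) \<pi> \<Longrightarrow>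
     orth S (push t (push s (push u \<pi>)))"
  unfolding krivine_structure_def by blast

lemma krivine_structure_SKK:
  assumes ks: "krivine_structure orth push app QP K S" and "orth u \<pi>"
  shows "orth (app (app S K) K) (push u \<pi>)"
proof -
  have "orth K (push u (push (app K u) \<pi>))"
    using krivine_structure_K[OF ks \<open>orth u \<pi>\<close>] .
  then have "orth (app (app K u) (app K u)) \<pi>"
    by (rule krivine_structure_app[OF ks, OF krivine_structure_app[OF ks]])
  then have "orth S (push K (push K (push u \<pi>)))"
    by (rule krivine_structure_S[OF ks])
  then show ?thesis
    by (rule krivine_structure_app[OF ks, OF krivine_structure_app[OF ks]])
qed

lemma krivine_structure_S_K_SKK:
  assumes ks: "krivine_structure orth push app QP K S" and "orth (app t u) \<pi>"
  shows "orth (app S (app K (app (app S K) K))) (push t (push u \<pi>))"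
proof -
  let ?I = "app (app S K) K"
  have "orth ?I (push (app t u) \<pi>)"
    using krivine_structure_SKK[OF ks \<open>orth (app t u) \<pi>\<close>] .
  then have "orth K (push ?I (push u (push (app t u) \<pi>)))"
    by (rule krivine_structure_K[OF ks])
  then have "orth (app (app (app K ?I) u) (app t u)) \<pi>"
    by (rule krivine_structure_app[OF ks, OF krivine_structure_app[OF ks,
          OF krivine_structure_app[OF ks]]])
  then have "orth S (push (app K ?I) (push t (push u \<pi>)))"
    by (rule krivine_structure_S[OF ks])
  then show ?thesis
    by (rule krivine_structure_app[OF ks])
qed

lemma subset_biclosure: "P \<subseteq> biclosure orth P"
  unfolding biclosure_def polar_terms_def polar_stacks_def by blast

lemma orth_biclosure_singleton: "orth t \<pi> \<Longrightarrow> \<pi>' \<in> biclosure orth {\<pi>} \<Longrightarrow> orth t \<pi>'"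
  unfolding biclosure_def polar_terms_def polar_stacks_def by blast

lemma arrow_bullet_subset_arrow: "arrow_bullet orth push P L \<subseteq> arrow push P L"
proof
  fix \<pi> assume "\<pi> \<in> arrow_bullet orth push P L"
  moreover have "\<pi> \<in> biclosure orth {\<pi>}"
    using subset_biclosure[of "{\<pi>}" orth] by simp
  ultimately show "\<pi> \<in> arrow push P L"
    unfolding arrow_bullet_def arrow_def by blast
qed

lemma arrow_subset_arrow_perp: "arrow push P L \<subseteq> arrow_perp orth push P L"
  unfolding arrow_perp_def by (rule subset_biclosure)

lemma arrow_perp_subset_arrow_club:
  assumes ks: "krivine_structure orth push app QP K S"
  shows "arrow_perp orth push P L \<subseteq> arrow_club orth app P L"
proof -
  have "app t l \<in> polar_stacks orth (arrow push P L)"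
    if "t \<in> polar_stacks orth P" and "l \<in> L" for t l
    using that krivine_structure_app[OF ks] unfolding polar_stacks_def arrow_def by blast
  then have "{app t l | t l. t \<in> polar_stacks orth P \<and> l \<in> L} \<subseteq> polar_stacks orth (arrow push P L)"
    by blast
  then show ?thesis
    unfolding arrow_club_def arrow_perp_def biclosure_def polar_terms_def by blast
qed

lemma arrow_club_subset_arrow_bullet:
  assumes ks: "krivine_structure orth push app QP K S"
  defines "E \<equiv> app S (app K (app (app S K) K))"
  shows "arrow_club orth app P L \<subseteq>
           arrow_bullet orth push
             (arrow_bullet orth push (polar_terms orth {app E E}) (polar_stacks orth P)) L"
  unfolding arrow_bullet_def
proof (intro subsetI CollectI ballI)
  fix \<pi> l \<pi>' t \<rho>
  assume "\<pi> \<in> arrow_club orth app P L" and "l \<in> L" and "\<pi>' \<in> biclosure orth {\<pi>}"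
    and "t \<in> polar_stacks orth P" and "\<rho> \<in> biclosure orth {push l \<pi>'}"
  have "orth (app t l) \<pi>"
    using \<open>\<pi> \<in> arrow_club orth app P L\<close> \<open>t \<in> _\<close> \<open>l \<in> L\<close>
    unfolding arrow_club_def polar_terms_def by blast
  then have "orth (app t l) \<pi>'"
    using \<open>\<pi>' \<in> _\<close> by (rule orth_biclosure_singleton)
  then have "orth E (push t (push l \<pi>'))"
    unfolding E_def by (rule krivine_structure_S_K_SKK[OF ks])
  then have "orth (app E t) (push l \<pi>')"
    by (rule krivine_structure_app[OF ks])
  then have "orth (app E t) \<rho>"
    using \<open>\<rho> \<in> _\<close> by (rule orth_biclosure_singleton)
  then have "orth E (push E (push t \<rho>))"
    unfolding E_def by (rule krivine_structure_S_K_SKK[OF ks])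
  then have "orth (app E E) (push t \<rho>)"
    by (rule krivine_structure_app[OF ks])
  then show "push t \<rho> \<in> polar_terms orth {app E E}"
    unfolding polar_terms_def by blast
qed

theorem mainTheorem6:
  fixes orth :: "'l \<Rightarrow> 's \<Rightarrow> bool" and push :: "'l \<Rightarrow> 's \<Rightarrow> 's"
    and app :: "'l \<Rightarrow> 'l \<Rightarrow> 'l" and QP :: "'l set" and K S :: 'l
    and P :: "'s set" and L :: "'l set"
  assumes "krivine_structure orth push app QP K S"
  defines "E \<equiv> app S (app K (app (app S K) K))"
  defines "\<eta>P \<equiv> arrow_bullet orth push (polar_terms orth {app E E}) (polar_stacks orth P)"
  shows "arrow_bullet orth push P L \<subseteq> arrow push P L \<and>
         arrow push P L \<subseteq> arrow_perp orth push P L \<and>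
         arrow_perp orth push P L \<subseteq> arrow_club orth app P L \<and>
         arrow_club orth app P L \<subseteq> arrow_bullet orth push \<eta>P L \<and>
         arrow_bullet orth push \<eta>P L \<subseteq> arrow push \<eta>P L \<and>
         arrow push \<eta>P L \<subseteq> arrow_perp orth push \<eta>P L"
  unfolding \<eta>P_def E_def
  by (intro conjI arrow_bullet_subset_arrow arrow_subset_arrow_perp
      arrow_perp_subset_arrow_club[OF assms(1)] arrow_club_subset_arrow_bullet[OF assms(1)])

end
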